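(* Let $t$ be a positive integer and let $G$ be a finite group (not necessarily abelian, written additively) such that the smallest prime divisor $p$ of $|G|$ satisfies $p>t$. Let $a_1,\dots,a_n$ be distinct non-identity elements of $G$ and let $M_1=[a_1^{\alpha_1},\dots,a_n^{\alpha_n}]$ and $M_2=[a_1^{\beta_1},\dots,a_n^{\beta_n}]$ be multisets (with nonnegative integer multiplicities $\alpha_i,\beta_i$). Assume that the underlying set of $M_2$ (i.e. $\{a_i:\beta_i>0\}$) has size larger than $2t^2$. Then there is a $t$-weakly sequenceable multiset $M_3$ such that $M_1\subseteq M_3\subseteq M_1\cup M_2$ and $|M_3\setminus M_1|\leq t^2$.
   Context: $[a_1^{\lambda_1},\dots,a_n^{\lambda_n}]$ denotes the multiset containing $a_i$ with multiplicity $\lambda_i$. For multisets, $\subseteq$ means multiplicity-wise inequality, $M_1\cup M_2$ is the multiset whose multiplicity of $a_i$ is $\alpha_i+\beta_i$, and $M_3\setminus M_1$ is the multiset difference (multiplicities subtracted); $|\cdot|$ is the size counted with multiplicity. Given a multiset $M$ of size $m$, a $t$-weak ordering (or $t$-weak sequencing) of $M$ is a sequence $(y_1,\dots,y_m)$ in which each element of $M$ appears exactly as many times as its multiplicity, such that the partial sums $s_0=0$, $s_i=y_1+y_2+\dots+y_i$ ($1\le i\le m$, summed left to right) satisfy $s_i\neq s_j$ whenever $0\le i<j\le m$ and $j-i\le t$. $M$ is $t$-weakly sequenceable if it admits a $t$-weak ordering. *)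

theory Defs
  imports "HOL-Algebra.Group" "HOL-Library.Multiset" "HOL-Computational_Algebra.Primes"
begin

text \<open>The group G is written multiplicatively in HOL-Algebra; its operation plays the
role of the (not necessarily commutative) addition of the paper.\<close>

definition partial_sum :: "('a, 'b) monoid_scheme \<Rightarrow> 'a list \<Rightarrow> nat \<Rightarrow> 'a" where
  "partial_sum G ys i = foldl (\<lambda>s y. s \<otimes>\<^bsub>G\<^esub> y) \<one>\<^bsub>G\<^esub> (take i ys)"

definition t_weak_ordering :: "('a, 'b) monoid_scheme \<Rightarrow> nat \<Rightarrow> 'a multiset \<Rightarrow> 'a list \<Rightarrow> bool" where
  "t_weak_ordering G t M ys \<longleftrightarrow> mset ys = M \<and>
     (\<forall>i j. i < j \<and> j \<le> length ys \<and> j - i \<le> t \<longrightarrow> partial_sum G ys i \<noteq> partial_sum G ys j)"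

definition t_weakly_sequenceable :: "('a, 'b) monoid_scheme \<Rightarrow> nat \<Rightarrow> 'a multiset \<Rightarrow> bool" where
  "t_weakly_sequenceable G t M \<longleftrightarrow> (\<exists>ys. t_weak_ordering G t M ys)"

end

(* Build the sequence greedily from M1. If some remaining element can be appended, append it.
   Otherwise every remaining value y satisfies s_i = s_m + y for one of the last t - 1 partial
   sums s_i, so fewer than t distinct values remain. Then pick a remaining value x and a fresh
   element z of M2 that avoids the at most t^2 values making some s_m + z + j x (j < t) collide
   with a recent partial sum, and append z followed by all copies of x: the partial sums inside
   this block are separated because every prime divisor of |G| exceeds t, so the order of x
   exceeds t. Each fresh element removes a distinct value of M1 and is needed only once fewer
   than t remain, so at most t elements of M2 are used, out of a supply of more than t^2 + t. *)

theory Submission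
  imports Defs "HOL-Algebra.Multiplicative_Group"
begin

definition t_weak_sequence :: "('a, 'b) monoid_scheme \<Rightarrow> nat \<Rightarrow> 'a list \<Rightarrow> bool" where
  "t_weak_sequence G t ys \<longleftrightarrow> t_weak_ordering G t (mset ys) ys"

lemma t_weak_sequence_iff:
  "t_weak_sequence G t ys \<longleftrightarrow>
     (\<forall>i j. i < j \<and> j \<le> length ys \<and> j - i \<le> t \<longrightarrow> partial_sum G ys i \<noteq> partial_sum G ys j)"
  by (simp add: t_weak_sequence_def t_weak_ordering_def)

lemma partial_sum_append_le:
  "i \<le> length ys \<Longrightarrow> partial_sum G (ys @ zs) i = partial_sum G ys i"
  by (simp add: partial_sum_def)

lemma partial_sum_snoc:
  "partial_sum G (ys @ [y]) (Suc (length ys)) = partial_sum G ys (length ys) \<otimes>\<^bsub>G\<^esub> y"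
  by (simp add: partial_sum_def)

lemma filter_mset_neq_plus_replicate_count:
  "filter_mset (\<lambda>y. y \<noteq> x) M + replicate_mset (count M x) x = M"
  using multiset_partition[of M "\<lambda>y. y \<noteq> x"] by (simp add: filter_eq_replicate_mset)

lemma (in monoid) foldl_mult_closed:
  "a \<in> carrier G \<Longrightarrow> set xs \<subseteq> carrier G \<Longrightarrow> foldl (\<lambda>s y. s \<otimes> y) a xs \<in> carrier G"
  by (induction xs arbitrary: a) auto

lemma (in monoid) partial_sum_closed:
  "set ys \<subseteq> carrier G \<Longrightarrow> partial_sum G ys i \<in> carrier G"
  unfolding partial_sum_def by (rule foldl_mult_closed) (auto dest: in_set_takeD)

lemma (in monoid) foldl_mult_replicate:
  "a \<in> carrier G \<Longrightarrow> x \<in> carrier G \<Longrightarrow> foldl (\<lambda>s y. s \<otimes> y) a (replicate k x) = a \<otimes> x [^] k"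
  by (induction k arbitrary: a) (simp_all add: m_assoc flip: nat_pow_Suc2)

lemma (in monoid) partial_sum_append_Cons_replicate:
  assumes "set ys \<subseteq> carrier G" "z \<in> carrier G" "x \<in> carrier G" "k \<le> r"
  shows "partial_sum G (ys @ z # replicate r x) (length ys + Suc k)
           = partial_sum G ys (length ys) \<otimes> z \<otimes> x [^] k"
proof -
  have "take (length ys + Suc k) (ys @ z # replicate r x) = ys @ z # replicate k x"
    using assms(4) by (simp add: min_absorb1)
  then show ?thesis
    using assms partial_sum_closed[OF assms(1), of "length ys"]
    by (simp add: partial_sum_def foldl_mult_replicate)
qed

lemma not_t_weak_sequence_snoc:
  assumes "t_weak_sequence G t ys" "\<not> t_weak_sequence G t (ys @ [y])"
  obtains i where "i \<le> length ys" "length ys < i + t"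
    "partial_sum G ys i = partial_sum G ys (length ys) \<otimes>\<^bsub>G\<^esub> y"
proof -
  obtain i j where ij: "i < j" "j \<le> Suc (length ys)" "j - i \<le> t"
    and eq: "partial_sum G (ys @ [y]) i = partial_sum G (ys @ [y]) j"
    using assms(2) by (auto simp: t_weak_sequence_iff)
  have "j = Suc (length ys)"
  proof (rule ccontr)
    assume "j \<noteq> Suc (length ys)"
    then have "partial_sum G ys i = partial_sum G ys j"
      using ij eq by (simp add: partial_sum_append_le)
    then show False
      using assms(1) ij \<open>j \<noteq> Suc (length ys)\<close> unfolding t_weak_sequence_iff by auto
  qed
  then show thesis
    using that[of i] ij eq by (simp add: partial_sum_append_le partial_sum_snoc)
qed

lemma (in group) prime_divisors_gt_imp_ord_gt:
  assumes "finite (carrier G)" "\<forall>p::nat. prime p \<and> p dvd card (carrier G) \<longrightarrow> p > t"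
    and "x \<in> carrier G" "x \<noteq> \<one>"
  shows "t < ord x"
proof -
  have "ord x \<noteq> 1" using ord_eq_1 assms by auto
  then obtain p :: nat where p: "prime p" "p dvd ord x" using prime_factor_nat by blast
  have ord_dvd: "ord x dvd card (carrier G)"
    using ord_dvd_group_order[OF assms(3)] by (simp add: order_def)
  then have "ord x > 0" using assms(1,3) card_gt_0_iff by (metis dvd_0_left_iff empty_iff gr0I)
  then have "p \<le> ord x" using p(2) by (rule dvd_imp_le[rotated])
  moreover have "p > t" using assms(2) p dvd_trans[OF p(2) ord_dvd] by blast
  ultimately show ?thesis by simp
qed

lemma (in group) pow_neq_pow_if_diff_lt_ord:
  assumes "x \<in> carrier G" "j < k" "k - j < ord x"
  shows "x [^] j \<noteq> x [^] k"
proof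
  assume "x [^] j = x [^] k"
  then have "x [^] (k - j) = \<one>" using pow_eq_div2[OF assms(1)] by metis
  then have "ord x dvd k - j" using pow_eq_id[OF assms(1)] by simp
  then show False using assms(2,3) by (simp add: nat_dvd_not_less)
qed

lemma (in group) card_not_appendable_lt:
  assumes ys: "t_weak_sequence G t ys" "set ys \<subseteq> carrier G"
    and S: "finite S" "S \<noteq> {}" "S \<subseteq> carrier G - {\<one>}"
    and blocked: "\<forall>y\<in>S. \<not> t_weak_sequence G t (ys @ [y])"
  shows "card S < t"
proof -
  let ?m = "length ys"
  let ?s = "partial_sum G ys"
  have s_closed: "?s i \<in> carrier G" for i using partial_sum_closed[OF ys(2)] .
  have "S \<subseteq> (\<lambda>i. inv (?s ?m) \<otimes> ?s i) ` {?m + 1 - t..<?m}" (is "S \<subseteq> ?f ` ?I")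
  proof
    fix y assume "y \<in> S"
    then have y: "y \<in> carrier G" "y \<noteq> \<one>" "\<not> t_weak_sequence G t (ys @ [y])"
      using S(3) blocked by auto
    then obtain i where i: "i \<le> ?m" "?m < i + t" "?s i = ?s ?m \<otimes> y"
      using not_t_weak_sequence_snoc[OF ys(1)] by blast
    then have "i \<noteq> ?m" using y s_closed by auto
    moreover have "y = inv (?s ?m) \<otimes> ?s i" using i(3) y s_closed by (simp add: inv_solve_left)
    ultimately show "y \<in> (\<lambda>i. inv (?s ?m) \<otimes> ?s i) ` {?m + 1 - t..<?m}"
      using i by (intro image_eqI[where x = i]) auto
  qed
  then have "card S \<le> card (?f ` ?I)" by (intro card_mono) auto
  also have "\<dots> \<le> card ?I" by (rule card_image_le) simp
  finally have "card S \<le> card ?I" .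
  moreover have "card S > 0" using S by auto
  ultimately show ?thesis by simp
qed

lemma (in group) t_weak_sequence_append_Cons_replicate:
  assumes ys: "t_weak_sequence G t ys" "set ys \<subseteq> carrier G"
    and z: "z \<in> carrier G" and x: "x \<in> carrier G" "t < ord x"
    and fresh: "\<And>i k. i \<le> length ys \<Longrightarrow> length ys + Suc k \<le> i + t \<Longrightarrow>
      partial_sum G ys i \<noteq> partial_sum G ys (length ys) \<otimes> z \<otimes> x [^] k"
  shows "t_weak_sequence G t (ys @ z # replicate r x)"
  unfolding t_weak_sequence_iff
proof (intro allI impI)
  let ?m = "length ys"
  let ?s = "partial_sum G ys"
  let ?s' = "partial_sum G (ys @ z # replicate r x)"
  have new: "?s' (?m + Suc k) = ?s ?m \<otimes> z \<otimes> x [^] k" if "k \<le> r" for k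
    using partial_sum_append_Cons_replicate[OF ys(2) z x(1) that] .
  fix i j assume ij: "i < j \<and> j \<le> length (ys @ z # replicate r x) \<and> j - i \<le> t"
  consider "j \<le> ?m" | "i \<le> ?m" "?m < j" | "?m < i" by linarith
  then show "?s' i \<noteq> ?s' j"
  proof cases
    case 1
    then show ?thesis using ys(1) ij by (simp add: partial_sum_append_le t_weak_sequence_iff)
  next
    case 2
    define k where "k = j - Suc ?m"
    have "j = ?m + Suc k" "k \<le> r" using 2 ij by (auto simp: k_def)
    then show ?thesis using fresh[of i k] 2 ij new by (simp add: partial_sum_append_le)
  next
    case 3
    define l k where "l = i - Suc ?m" and "k = j - Suc ?m"
    have "i = ?m + Suc l" "j = ?m + Suc k" "l < k" "k \<le> r" using 3 ij by (auto simp: l_def k_def)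
    moreover have "x [^] l \<noteq> x [^] k"
      using pow_neq_pow_if_diff_lt_ord[OF x(1)] calculation ij x(2) by simp
    ultimately show ?thesis using new z x(1) partial_sum_closed[OF ys(2)] by (simp add: m_assoc)
  qed
qed

lemma (in group) exists_block_head:
  assumes ys: "set ys \<subseteq> carrier G" and x: "x \<in> carrier G"
    and U: "U \<subseteq> carrier G" "finite U" "t * t < card U"
  obtains z where "z \<in> U" "\<And>i k. i \<le> length ys \<Longrightarrow> length ys + Suc k \<le> i + t \<Longrightarrow>
      partial_sum G ys i \<noteq> partial_sum G ys (length ys) \<otimes> z \<otimes> x [^] k"
proof -
  let ?m = "length ys"
  let ?s = "partial_sum G ys"
  have s_closed: "?s i \<in> carrier G" for i using partial_sum_closed[OF ys] .
  define I where "I = {?m + 1 - t..?m} \<times> {..<t}"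
  define F where "F = (\<lambda>(i, k). inv (?s ?m) \<otimes> ?s i \<otimes> inv (x [^] k)) ` I"
  have "card F \<le> card I" unfolding F_def by (rule card_image_le) (simp add: I_def)
  also have "\<dots> \<le> t * t" by (simp add: I_def card_cartesian_product) linarith
  finally have "\<not> U \<subseteq> F"
    using U card_mono[of F U] by (auto simp: F_def I_def)
  then obtain z where z: "z \<in> U" "z \<notin> F" by blast
  have z_closed: "z \<in> carrier G" using z(1) U(1) by blast
  show thesis
  proof (rule that[OF z(1)])
    fix i k assume i: "i \<le> ?m" "?m + Suc k \<le> i + t"
    show "?s i \<noteq> ?s ?m \<otimes> z \<otimes> x [^] k"
    proof
      assume "?s i = ?s ?m \<otimes> z \<otimes> x [^] k"
      then have "z = inv (?s ?m) \<otimes> ?s i \<otimes> inv (x [^] k)"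
        using s_closed x z_closed by (simp add: m_assoc inv_solve_left)
      moreover have "(i, k) \<in> I" using i by (auto simp: I_def)
      ultimately show False using z(2) unfolding F_def by auto
    qed
  qed
qed

lemma (in group) t_weak_sequence_extension:
  assumes ord: "\<And>x. x \<in> carrier G \<Longrightarrow> x \<noteq> \<one> \<Longrightarrow> t < ord x"
    and "t_weak_sequence G t ys" "set ys \<subseteq> carrier G" "set_mset R \<subseteq> carrier G - {\<one>}"
    and "U \<subseteq> carrier G" "finite U" "t * t + min (card (set_mset R)) t \<le> card U"
  shows "\<exists>zs W. t_weak_sequence G t (ys @ zs) \<and> mset zs = R + mset_set W \<and> W \<subseteq> U
           \<and> card W \<le> min (card (set_mset R)) t"
  using assms(2-)
proof (induction "size R" arbitrary: R ys U rule: less_induct)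
  case less
  note ys = less.prems(1,2) and R = less.prems(3) and U = less.prems(4-6)
  consider "R = {#}" | x where "x \<in># R" "t_weak_sequence G t (ys @ [x])"
    | "R \<noteq> {#}" "\<forall>x\<in>#R. \<not> t_weak_sequence G t (ys @ [x])" by blast
  then show ?case
  proof cases
    case 1
    then show ?thesis using ys by (intro exI[of _ "[]"] exI[of _ "{}"]) auto
  next
    case (2 x)
    have supp: "set_mset (R - {#x#}) \<subseteq> set_mset R" by (rule set_mset_mono) simp
    then have card_le: "card (set_mset (R - {#x#})) \<le> card (set_mset R)" by (simp add: card_mono)
    have "size (R - {#x#}) < size R" using 2(1) by (simp add: size_Diff1_less)
    moreover have "set (ys @ [x]) \<subseteq> carrier G" using ys(2) R 2(1) by auto
    moreover have "set_mset (R - {#x#}) \<subseteq> carrier G - {\<one>}" using R supp by blast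
    moreover have "t * t + min (card (set_mset (R - {#x#}))) t \<le> card U"
      using U(3) card_le by (simp add: min_def split: if_splits)
    ultimately obtain zs W where zs: "t_weak_sequence G t ((ys @ [x]) @ zs)"
      "mset zs = R - {#x#} + mset_set W" "W \<subseteq> U" "card W \<le> min (card (set_mset (R - {#x#}))) t"
      using less.hyps[OF _ 2(2) _ _ U(1,2)] by blast
    show ?thesis
      using zs 2 card_le by (intro exI[of _ "x # zs"] exI[of _ W]) (auto simp: insert_DiffM)
  next
    case 3
    let ?c = "card (set_mset R)"
    have "?c < t" using card_not_appendable_lt[OF ys _ _ _ 3(2)] 3(1) R by auto
    obtain x where x: "x \<in># R" using 3(1) by blast
    then have x_closed: "x \<in> carrier G" and "t < ord x" using R ord by auto
    have "0 < ?c" using 3(1) by (simp add: card_gt_0_iff)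
    then have "t * t < card U" using U(3) \<open>?c < t\<close> by simp
    then obtain z where z: "z \<in> U" "\<And>i k. i \<le> length ys \<Longrightarrow> length ys + Suc k \<le> i + t \<Longrightarrow>
        partial_sum G ys i \<noteq> partial_sum G ys (length ys) \<otimes> z \<otimes> x [^] k"
      using exists_block_head[OF ys(2) x_closed U(1,2)] by blast
    define r where "r = count R x"
    define R' where "R' = filter_mset (\<lambda>y. y \<noteq> x) R"
    have R_split: "R = R' + replicate_mset r x"
      unfolding R'_def r_def by (rule filter_mset_neq_plus_replicate_count[symmetric])
    have supp': "set_mset R' = set_mset R - {x}" by (auto simp: R'_def)
    have card_supp': "card (set_mset R') = ?c - 1" using supp' x by simp
    let ?ys' = "ys @ z # replicate r x"
    have "size R' < size R" using x arg_cong[OF R_split, of size] by (simp add: r_def)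
    moreover have "t_weak_sequence G t ?ys'"
      using t_weak_sequence_append_Cons_replicate[OF ys _ x_closed \<open>t < ord x\<close> z(2)] z(1) U(1) by blast
    moreover have "set ?ys' \<subseteq> carrier G" using ys(2) z(1) U(1) x_closed by auto
    moreover have "set_mset R' \<subseteq> carrier G - {\<one>}" using R supp' by blast
    moreover have "U - {z} \<subseteq> carrier G" "finite (U - {z})" using U by auto
    moreover have "t * t + min (card (set_mset R')) t \<le> card (U - {z})"
      using U(2,3) z(1) card_supp' \<open>0 < ?c\<close> \<open>?c < t\<close> by simp
    ultimately obtain zs W where zs: "t_weak_sequence G t (?ys' @ zs)" "mset zs = R' + mset_set W"
      "W \<subseteq> U - {z}" "card W \<le> min (card (set_mset R')) t"
      using less.hyps by blast
    have W: "finite W" "z \<notin> W" using zs(3) U(2) finite_subset by auto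
    show ?thesis
    proof (intro exI conjI)
      show "t_weak_sequence G t (ys @ (z # replicate r x @ zs))" using zs(1) by simp
      show "mset (z # replicate r x @ zs) = R + mset_set (insert z W)"
        using zs(2) R_split W by (simp add: ac_simps)
      show "insert z W \<subseteq> U" using zs(3) z(1) by blast
      show "card (insert z W) \<le> min ?c t"
        using zs(4) W card_supp' \<open>0 < ?c\<close> \<open>?c < t\<close> by simp
    qed
  qed
qed

theorem proposition2p2:
  fixes G :: "('a, 'b) monoid_scheme" and t :: nat and M1 M2 :: "'a multiset"
  assumes "group G" and "finite (carrier G)"
    and "t \<ge> 1"
    and "\<forall>p::nat. prime p \<and> p dvd card (carrier G) \<longrightarrow> p > t"
    and "set_mset M1 \<subseteq> carrier G - {\<one>\<^bsub>G\<^esub>}"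
    and "set_mset M2 \<subseteq> carrier G - {\<one>\<^bsub>G\<^esub>}"
    and "card (set_mset M2) > 2 * t^2"
  shows "\<exists>M3. t_weakly_sequenceable G t M3 \<and> M1 \<subseteq># M3 \<and> M3 \<subseteq># M1 + M2
              \<and> size (M3 - M1) \<le> t^2"
proof -
  interpret group G by (rule assms(1))
  have ord: "\<And>x. x \<in> carrier G \<Longrightarrow> x \<noteq> \<one>\<^bsub>G\<^esub> \<Longrightarrow> t < ord x"
    using prime_divisors_gt_imp_ord_gt[OF assms(2,4)] .
  have "t \<le> t * t" by (rule le_square)
  then have "t * t + min (card (set_mset M1)) t \<le> card (set_mset M2)"
    using assms(7) min.cobounded2[of "card (set_mset M1)" t] unfolding power2_eq_square by linarith
  moreover have "t_weak_sequence G t []" by (simp add: t_weak_sequence_iff)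
  ultimately obtain zs W where zs: "t_weak_sequence G t zs" "mset zs = M1 + mset_set W"
    and W: "W \<subseteq> set_mset M2" "card W \<le> t"
    using t_weak_sequence_extension[OF ord _ _ assms(5), of "[]" "set_mset M2"] assms(6) by auto
  have "mset_set W \<subseteq># mset_set (set_mset M2)" using W(1) by (simp add: subset_imp_msubset_mset_set)
  then have "mset_set W \<subseteq># M2" using mset_set_set_mset_msubset subset_mset.order_trans by blast
  moreover have "card W \<le> t^2" using W(2) \<open>t \<le> t * t\<close> unfolding power2_eq_square by linarith
  ultimately show ?thesis
    using zs by (intro exI[of _ "mset zs"]) (auto simp: t_weakly_sequenceable_def t_weak_sequence_def)
qed

end
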